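(* Assume the setting described in the context and let $\mathscr K\subseteq\mathbb R^{\mathfrak d}$ be compact. Then there exists $\mathscr L\in\mathbb R$ such that for all $\theta,\vartheta\in\mathscr K$ it holds that $$|\mathcal L_\infty(\theta)-\mathcal L_\infty(\vartheta)|+\sup_{x\in[a,b]^{\ell_0}}\|\mathcal N^{L,\theta}_\infty(x)-\mathcal N^{L,\vartheta}_\infty(x)\|\le\mathscr L\|\theta-\vartheta\|.$$
   Context: Setting. Let $L,\mathfrak d\in\mathbb N=\{1,2,\dots\}$, $(\ell_k)_{k\in\mathbb N_0}\subseteq\mathbb N$, $a\in\mathbb R$, $b\in(a,\infty)$ with $\mathfrak d=\sum_{k=1}^L\ell_k(\ell_{k-1}+1)$; let $\mathbf d_k=\sum_{h=1}^k\ell_h(\ell_{h-1}+1)$ for $k\in\mathbb N_0$. For $\theta=(\theta_1,\dots,\theta_{\mathfrak d})\in\mathbb R^{\mathfrak d}$, $k\in\{1,\dots,L\}$, $i\in\{1,\dots,\ell_k\}$, $j\in\{1,\dots,\ell_{k-1}\}$ let $\mathfrak w^{k,\theta}_{i,j}=\theta_{(i-1)\ell_{k-1}+j+\mathbf d_{k-1}}$ and $\mathfrak b^{k,\theta}_i=\theta_{\ell_k\ell_{k-1}+i+\mathbf d_{k-1}}$, let $\mathfrak w^{k,\theta}=(\mathfrak w^{k,\theta}_{i,j})_{i,j}\in\mathbb R^{\ell_k\times\ell_{k-1}}$, $\mathfrak b^{k,\theta}=(\mathfrak b^{k,\theta}_1,\dots,\mathfrak b^{k,\theta}_{\ell_k})\in\mathbb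 R^{\ell_k}$, and $\mathcal A^\theta_k(x)=\mathfrak b^{k,\theta}+\mathfrak w^{k,\theta}x$. Let $\mathfrak M_\infty(x_1,\dots,x_n)=(\max\{x_1,0\},\dots,\max\{x_n,0\})$ and $\|\cdot\|$ the Euclidean norm. Define $\mathcal N^{k,\theta}_\infty\colon\mathbb R^{\ell_0}\to\mathbb R^{\ell_k}$, $k\in\{1,\dots,L\}$, by $\mathcal N^{1,\theta}_\infty=\mathcal A^\theta_1$ and $\mathcal N^{k+1,\theta}_\infty(x)=\mathcal A^\theta_{k+1}(\mathfrak M_\infty(\mathcal N^{k,\theta}_\infty(x)))$. Let $\mu$ be a measure on the Borel $\sigma$-algebra of $[a,b]^{\ell_0}$ with $\mu([a,b]^{\ell_0})\in\mathbb R$, let $f\colon[a,b]^{\ell_0}\to\mathbb R^{\ell_L}$ be measurable, and let $\mathcal L_\infty\colon\mathbb R^{\mathfrak d}\to\mathbb R$, $\mathcal L_\infty(\theta)=\int_{[a,b]^{\ell_0}}\|\mathcal N^{L,\theta}_\infty(x)-f(x)\|^2\,\mu(dx)$ (these integrals are real numbers as part of the setting). *)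

theory Defs
  imports "HOL-Analysis.Analysis"
begin

text \<open>Vectors in R^n are represented as functions nat => real, of which only
  the coordinates 1..n matter. Layer widths are ell :: nat => nat.\<close>

definition dd :: "(nat \<Rightarrow> nat) \<Rightarrow> nat \<Rightarrow> nat" where
  "dd ell k = (\<Sum>h = 1..k. ell h * (ell (h - 1) + 1))"

definition wgt :: "(nat \<Rightarrow> nat) \<Rightarrow> (nat \<Rightarrow> real) \<Rightarrow> nat \<Rightarrow> nat \<Rightarrow> nat \<Rightarrow> real" where
  "wgt ell \<theta> k i j = \<theta> ((i - 1) * ell (k - 1) + j + dd ell (k - 1))"

definition bias :: "(nat \<Rightarrow> nat) \<Rightarrow> (nat \<Rightarrow> real) \<Rightarrow> nat \<Rightarrow> nat \<Rightarrow> real" where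
  "bias ell \<theta> k i = \<theta> (ell k * ell (k - 1) + i + dd ell (k - 1))"

definition affine :: "(nat \<Rightarrow> nat) \<Rightarrow> (nat \<Rightarrow> real) \<Rightarrow> nat \<Rightarrow> (nat \<Rightarrow> real) \<Rightarrow> (nat \<Rightarrow> real)" where
  "affine ell \<theta> k x = (\<lambda>i. if i \<in> {1..ell k}
      then bias ell \<theta> k i + (\<Sum>j = 1..ell (k - 1). wgt ell \<theta> k i j * x j) else 0)"

definition relu :: "(nat \<Rightarrow> real) \<Rightarrow> (nat \<Rightarrow> real)" where
  "relu x = (\<lambda>i. max (x i) 0)"

text \<open>Realization N^{k,theta}: N 1 = A_1, N (k+1) = A_{k+1} o relu o N k.
  (The value for k = 0 is an irrelevant convention.)\<close>
primrec realiz :: "(nat \<Rightarrow> nat) \<Rightarrow> nat \<Rightarrow> (nat \<Rightarrow> real) \<Rightarrow> (nat \<Rightarrow> real) \<Rightarrow> (nat \<Rightarrow> real)" where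
  "realiz ell 0 \<theta> x = x"
| "realiz ell (Suc k) \<theta> x =
     (if k = 0 then affine ell \<theta> 1 x else affine ell \<theta> (Suc k) (relu (realiz ell k \<theta> x)))"

definition vnorm :: "nat \<Rightarrow> (nat \<Rightarrow> real) \<Rightarrow> real" where
  "vnorm n v = sqrt (\<Sum>i = 1..n. (v i)\<^sup>2)"

definition cube :: "nat \<Rightarrow> real \<Rightarrow> real \<Rightarrow> (nat \<Rightarrow> real) set" where
  "cube n a b = PiE {1..n} (\<lambda>_. {a..b})"

definition params :: "nat \<Rightarrow> (nat \<Rightarrow> real) set" where
  "params d = {\<theta>. \<forall>i. i \<notin> {1..d} \<longrightarrow> \<theta> i = 0}"

definition loss :: "(nat \<Rightarrow> nat) \<Rightarrow> nat \<Rightarrow> (nat \<Rightarrow> real) measure \<Rightarrow> ((nat \<Rightarrow> real) \<Rightarrow> (nat \<Rightarrow> real))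
    \<Rightarrow> (nat \<Rightarrow> real) \<Rightarrow> real" where
  "loss ell L M f \<theta> = (\<integral>x. (vnorm (ell L) (\<lambda>i. realiz ell L \<theta> x i - f x i))\<^sup>2 \<partial>M)"

end

theory Submission
  imports Defs
begin

text \<open>Let \<open>\<delta> = \<parallel>\<theta> - \<theta>'\<parallel>\<close>. On the compact set \<open>K\<close> all parameter coordinates are bounded by some
  \<open>R\<close>, and inputs from the cube are bounded by \<open>B = \<bar>a\<bar> + \<bar>b\<bar>\<close>. Splitting
  \<open>w u - w' u' = (w - w') u + w' (u - u')\<close> and using that ReLU is 1-Lipschitz, induction over the
  layers shows that the outputs of layer \<open>k\<close> are bounded by a constant \<open>U\<^sub>k\<close>
  (\<open>realiz_bound\<close>) and differ by at most \<open>c\<^sub>k \<delta>\<close> (\<open>realiz_lipschitz_const\<close>). This is the bound on the supremum. For the loss, write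
  \<open>\<bar>g\<^sup>2 - g'\<^sup>2\<bar> = \<bar>g - g'\<bar> \<bar>g + g'\<bar>\<close> for the residual norms: the first factor is at most \<open>c\<^sub>L \<delta>\<close>,
  and the second is dominated by the integrable residual norm of the zero network plus a constant.\<close>

lemma vnorm_eq_L2_set: "vnorm n v = L2_set v {1..n}"
  unfolding vnorm_def L2_set_def by simp

lemma vnorm_nonneg: "vnorm n v \<ge> 0"
  by (simp add: vnorm_eq_L2_set)

lemma vnorm_triangle: "vnorm n (\<lambda>i. u i + w i) \<le> vnorm n u + vnorm n w"
  unfolding vnorm_eq_L2_set by (rule L2_set_triangle_ineq)

lemma vnorm_minus_commute: "vnorm n (\<lambda>i. u i - w i) = vnorm n (\<lambda>i. w i - u i)"
  unfolding vnorm_def by (simp add: power2_commute)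

lemma vnorm_abs_diff_le: "\<bar>vnorm n u - vnorm n w\<bar> \<le> vnorm n (\<lambda>i. u i - w i)"
  using vnorm_triangle[of n w "\<lambda>i. u i - w i"] vnorm_triangle[of n u "\<lambda>i. w i - u i"]
  by (simp add: vnorm_minus_commute[of n u w])

lemma vnorm_diff_triangle:
  "vnorm n (\<lambda>i. u i - w i) \<le> vnorm n (\<lambda>i. u i - v i) + vnorm n (\<lambda>i. v i - w i)"
  using vnorm_triangle[of n "\<lambda>i. u i - v i" "\<lambda>i. v i - w i"] by simp

lemma vnorm_le_of_abs_le:
  assumes "\<And>i. i \<in> {1..n} \<Longrightarrow> \<bar>v i\<bar> \<le> e"
  shows "vnorm n v \<le> real n * e"
proof -
  have "vnorm n v \<le> (\<Sum>i=1..n. \<bar>v i\<bar>)"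
    unfolding vnorm_eq_L2_set by (rule L2_set_le_sum_abs)
  also have "\<dots> \<le> (\<Sum>i=1..n. e)"
    by (rule sum_mono) (use assms in auto)
  finally show ?thesis by simp
qed

lemma params_abs_diff_le_vnorm:
  assumes "\<theta> \<in> params d" "\<theta>' \<in> params d"
  shows "\<bar>\<theta> m - \<theta>' m\<bar> \<le> vnorm d (\<lambda>i. \<theta> i - \<theta>' i)"
proof (cases "m \<in> {1..d}")
  case True
  have "\<bar>\<theta> m - \<theta>' m\<bar> \<le> L2_set (\<lambda>i. \<bar>\<theta> i - \<theta>' i\<bar>) {1..d}"
    by (rule member_le_L2_set) (use True in auto)
  then show ?thesis by (simp add: vnorm_eq_L2_set L2_set_def)
next
  case False
  then show ?thesis using assms by (simp add: params_def vnorm_nonneg)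
qed

lemma compact_params_abs_le:
  assumes "compact K" "K \<subseteq> params d"
  obtains R where "R \<ge> 0" "\<And>\<theta> m. \<theta> \<in> K \<Longrightarrow> \<bar>\<theta> m\<bar> \<le> R"
proof -
  have "continuous_on K (\<lambda>\<theta>. \<Sum>m\<in>{1..d}. \<bar>\<theta> m\<bar>)"
    by (intro continuous_intros continuous_on_subset[OF continuous_on_product_coordinates]) simp
  then have "bounded ((\<lambda>\<theta>. \<Sum>m\<in>{1..d}. \<bar>\<theta> m\<bar>) ` K)"
    using assms(1) by (intro compact_imp_bounded compact_continuous_image)
  then obtain R where "R > 0" and R: "\<And>\<theta>. \<theta> \<in> K \<Longrightarrow> (\<Sum>m\<in>{1..d}. \<bar>\<theta> m\<bar>) \<le> R"
    unfolding bounded_pos by force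
  have "\<bar>\<theta> m\<bar> \<le> R" if \<theta>: "\<theta> \<in> K" for \<theta> m
  proof (cases "m \<in> {1..d}")
    case True
    then have "\<bar>\<theta> m\<bar> \<le> (\<Sum>m\<in>{1..d}. \<bar>\<theta> m\<bar>)"
      by (intro member_le_sum) auto
    then show ?thesis using R[OF \<theta>] by linarith
  next
    case False
    then show ?thesis using \<theta> assms(2) \<open>R > 0\<close> by (auto simp: params_def)
  qed
  with \<open>R > 0\<close> show thesis by (intro that[of R]) auto
qed

lemma cube_abs_le: "x \<in> cube n a b \<Longrightarrow> j \<in> {1..n} \<Longrightarrow> \<bar>x j\<bar> \<le> \<bar>a\<bar> + \<bar>b\<bar>"
  unfolding cube_def PiE_iff by (smt (verit) atLeastAtMost_iff)

lemma cube_nonempty: "a \<le> b \<Longrightarrow> cube n a b \<noteq> {}"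
  by (simp add: cube_def PiE_eq_empty_iff)

lemma affine_abs_le:
  assumes "i \<in> {1..ell k}"
    and \<theta>: "\<And>m. \<bar>\<theta> m\<bar> \<le> R"
    and u: "\<And>j. j \<in> {1..ell (k - 1)} \<Longrightarrow> \<bar>u j\<bar> \<le> U"
  shows "\<bar>affine ell \<theta> k u i\<bar> \<le> R + real (ell (k - 1)) * (R * U)"
proof -
  have "R \<ge> 0" using \<theta>[of 0] by linarith
  have "\<bar>affine ell \<theta> k u i\<bar>
      \<le> \<bar>bias ell \<theta> k i\<bar> + (\<Sum>j = 1..ell (k - 1). \<bar>wgt ell \<theta> k i j\<bar> * \<bar>u j\<bar>)"
    using assms(1) unfolding affine_def abs_mult[symmetric]
    by (simp add: order_trans[OF abs_triangle_ineq add_left_mono[OF sum_abs]])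
  also have "\<dots> \<le> R + (\<Sum>j = 1..ell (k - 1). R * U)"
    using \<open>R \<ge> 0\<close> u by (intro add_mono sum_mono mult_mono) (auto simp: bias_def wgt_def \<theta>)
  finally show ?thesis by simp
qed

lemma affine_diff_abs_le:
  assumes "i \<in> {1..ell k}"
    and \<theta>': "\<And>m. \<bar>\<theta>' m\<bar> \<le> R"
    and \<theta>_\<theta>': "\<And>m. \<bar>\<theta> m - \<theta>' m\<bar> \<le> \<delta>"
    and u: "\<And>j. j \<in> {1..ell (k - 1)} \<Longrightarrow> \<bar>u j\<bar> \<le> U"
    and u_u': "\<And>j. j \<in> {1..ell (k - 1)} \<Longrightarrow> \<bar>u j - u' j\<bar> \<le> \<epsilon>"
  shows "\<bar>affine ell \<theta> k u i - affine ell \<theta>' k u' i\<bar> \<le> \<delta> + real (ell (k - 1)) * (\<delta> * U + R * \<epsilon>)"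
proof -
  have "R \<ge> 0" "\<delta> \<ge> 0" using \<theta>'[of 0] \<theta>_\<theta>'[of 0] by linarith+
  have split: "affine ell \<theta> k u i - affine ell \<theta>' k u' i =
      (bias ell \<theta> k i - bias ell \<theta>' k i) + (\<Sum>j = 1..ell (k - 1).
        (wgt ell \<theta> k i j - wgt ell \<theta>' k i j) * u j + wgt ell \<theta>' k i j * (u j - u' j))"
    using assms(1) by (simp add: affine_def sum_subtractf[symmetric] algebra_simps)
  have "\<bar>affine ell \<theta> k u i - affine ell \<theta>' k u' i\<bar>
      \<le> \<bar>bias ell \<theta> k i - bias ell \<theta>' k i\<bar> + (\<Sum>j = 1..ell (k - 1).
        \<bar>wgt ell \<theta> k i j - wgt ell \<theta>' k i j\<bar> * \<bar>u j\<bar> + \<bar>wgt ell \<theta>' k i j\<bar> * \<bar>u j - u' j\<bar>)"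
    unfolding split abs_mult[symmetric]
    by (rule order_trans[OF abs_triangle_ineq add_left_mono[OF order_trans[OF sum_abs sum_mono]]])
      (rule abs_triangle_ineq)
  also have "\<dots> \<le> \<delta> + (\<Sum>j = 1..ell (k - 1). \<delta> * U + R * \<epsilon>)"
    using \<open>R \<ge> 0\<close> \<open>\<delta> \<ge> 0\<close> u u_u'
    by (intro add_mono sum_mono mult_mono) (auto simp: bias_def wgt_def \<theta>' \<theta>_\<theta>')
  finally show ?thesis by simp
qed

lemma realiz_Suc_eq_affine:
  "realiz ell (Suc k) \<theta> x =
     affine ell \<theta> (Suc k) (if k = 0 then realiz ell k \<theta> x else relu (realiz ell k \<theta> x))"
  by simp

primrec realiz_bound :: "(nat \<Rightarrow> nat) \<Rightarrow> real \<Rightarrow> real \<Rightarrow> nat \<Rightarrow> real" where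
  "realiz_bound ell R B 0 = B"
| "realiz_bound ell R B (Suc k) = R + real (ell k) * (R * realiz_bound ell R B k)"

primrec realiz_lipschitz_const :: "(nat \<Rightarrow> nat) \<Rightarrow> real \<Rightarrow> real \<Rightarrow> nat \<Rightarrow> real" where
  "realiz_lipschitz_const ell R B 0 = 0"
| "realiz_lipschitz_const ell R B (Suc k) =
     1 + real (ell k) * (realiz_bound ell R B k + R * realiz_lipschitz_const ell R B k)"

lemma realiz_abs_le:
  assumes \<theta>: "\<And>m. \<bar>\<theta> m\<bar> \<le> R" and x: "\<And>j. j \<in> {1..ell 0} \<Longrightarrow> \<bar>x j\<bar> \<le> B"
  shows "i \<in> {1..ell k} \<Longrightarrow> \<bar>realiz ell k \<theta> x i\<bar> \<le> realiz_bound ell R B k"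
proof (induction k arbitrary: i)
  case 0
  then show ?case using x by simp
next
  case (Suc k)
  have "\<bar>(if k = 0 then realiz ell k \<theta> x else relu (realiz ell k \<theta> x)) j\<bar> \<le> realiz_bound ell R B k"
    if "j \<in> {1..ell k}" for j
    using Suc.IH[OF that] by (auto simp: relu_def)
  then show ?case
    unfolding realiz_Suc_eq_affine
    using affine_abs_le[where ell = ell and k = "Suc k", OF Suc.prems \<theta>] by simp
qed

lemma realiz_diff_abs_le:
  assumes \<theta>: "\<And>m. \<bar>\<theta> m\<bar> \<le> R" and \<theta>': "\<And>m. \<bar>\<theta>' m\<bar> \<le> R"
    and \<theta>_\<theta>': "\<And>m. \<bar>\<theta> m - \<theta>' m\<bar> \<le> \<delta>"
    and x: "\<And>j. j \<in> {1..ell 0} \<Longrightarrow> \<bar>x j\<bar> \<le> B"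
  shows "i \<in> {1..ell k} \<Longrightarrow>
    \<bar>realiz ell k \<theta> x i - realiz ell k \<theta>' x i\<bar> \<le> realiz_lipschitz_const ell R B k * \<delta>"
proof (induction k arbitrary: i)
  case 0
  then show ?case by simp
next
  case (Suc k)
  define v where "v \<theta> = (if k = 0 then realiz ell k \<theta> x else relu (realiz ell k \<theta> x))" for \<theta>
  have "\<bar>v \<theta> j\<bar> \<le> realiz_bound ell R B k" if "j \<in> {1..ell k}" for j
    using realiz_abs_le[of \<theta> R ell x B, OF \<theta> x that] by (auto simp: v_def relu_def)
  moreover have "\<bar>v \<theta> j - v \<theta>' j\<bar> \<le> realiz_lipschitz_const ell R B k * \<delta>" if "j \<in> {1..ell k}" for j
    using Suc.IH[OF that] by (auto simp: v_def relu_def)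
  ultimately have "\<bar>affine ell \<theta> (Suc k) (v \<theta>) i - affine ell \<theta>' (Suc k) (v \<theta>') i\<bar>
      \<le> \<delta> + real (ell k) * (\<delta> * realiz_bound ell R B k + R * (realiz_lipschitz_const ell R B k * \<delta>))"
    using affine_diff_abs_le[where ell = ell and k = "Suc k" and \<theta> = \<theta> and \<theta>' = \<theta>',
        OF Suc.prems \<theta>' \<theta>_\<theta>'] by simp
  then show ?case
    unfolding realiz_Suc_eq_affine v_def[symmetric] by (simp add: algebra_simps)
qed

lemma realiz_diff_vnorm_le:
  assumes "\<theta> \<in> params d" "\<theta>' \<in> params d"
    and \<theta>: "\<And>m. \<bar>\<theta> m\<bar> \<le> R" and \<theta>': "\<And>m. \<bar>\<theta>' m\<bar> \<le> R"
    and x: "\<And>j. j \<in> {1..ell 0} \<Longrightarrow> \<bar>x j\<bar> \<le> B"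
  shows "vnorm (ell k) (\<lambda>i. realiz ell k \<theta> x i - realiz ell k \<theta>' x i)
    \<le> real (ell k) * realiz_lipschitz_const ell R B k * vnorm d (\<lambda>i. \<theta> i - \<theta>' i)"
proof -
  have "vnorm (ell k) (\<lambda>i. realiz ell k \<theta> x i - realiz ell k \<theta>' x i)
      \<le> real (ell k) * (realiz_lipschitz_const ell R B k * vnorm d (\<lambda>i. \<theta> i - \<theta>' i))"
    using realiz_diff_abs_le[OF \<theta> \<theta>' params_abs_diff_le_vnorm[OF assms(1,2)] x]
    by (intro vnorm_le_of_abs_le)
  then show ?thesis by (simp add: mult.assoc)
qed

lemma realiz_diff_vnorm_le_bound:
  assumes \<theta>: "\<And>m. \<bar>\<theta> m\<bar> \<le> R" and \<theta>': "\<And>m. \<bar>\<theta>' m\<bar> \<le> R"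
    and x: "\<And>j. j \<in> {1..ell 0} \<Longrightarrow> \<bar>x j\<bar> \<le> B"
  shows "vnorm (ell k) (\<lambda>i. realiz ell k \<theta> x i - realiz ell k \<theta>' x i)
    \<le> real (ell k) * (2 * realiz_bound ell R B k)"
proof (rule vnorm_le_of_abs_le)
  fix i assume "i \<in> {1..ell k}"
  then show "\<bar>realiz ell k \<theta> x i - realiz ell k \<theta>' x i\<bar> \<le> 2 * realiz_bound ell R B k"
    using realiz_abs_le[of \<theta> R ell x B, OF \<theta> x] realiz_abs_le[of \<theta>' R ell x B, OF \<theta>' x]
    by (smt (verit))
qed

lemma integral_square_diff_le:
  fixes g g' h :: "'a \<Rightarrow> real"
  assumes "integrable M (\<lambda>x. (g x)\<^sup>2)" "integrable M (\<lambda>x. (g' x)\<^sup>2)" "integrable M h"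
    and diff: "\<And>x. x \<in> space M \<Longrightarrow> \<bar>g x - g' x\<bar> \<le> \<epsilon>"
    and sum: "\<And>x. x \<in> space M \<Longrightarrow> \<bar>g x\<bar> + \<bar>g' x\<bar> \<le> h x"
  shows "\<bar>(\<integral>x. (g x)\<^sup>2 \<partial>M) - (\<integral>x. (g' x)\<^sup>2 \<partial>M)\<bar> \<le> \<epsilon> * (\<integral>x. h x \<partial>M)"
proof -
  have pointwise: "\<bar>(g x)\<^sup>2 - (g' x)\<^sup>2\<bar> \<le> \<epsilon> * h x" if "x \<in> space M" for x
  proof -
    have "\<bar>(g x)\<^sup>2 - (g' x)\<^sup>2\<bar> = \<bar>g x - g' x\<bar> * \<bar>g x + g' x\<bar>"
      by (simp add: power2_eq_square algebra_simps flip: abs_mult)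
    also have "\<dots> \<le> \<epsilon> * h x"
      using diff[OF that] sum[OF that] abs_triangle_ineq[of "g x" "g' x"]
      by (intro mult_mono) auto
    finally show ?thesis .
  qed
  have "\<bar>(\<integral>x. (g x)\<^sup>2 \<partial>M) - (\<integral>x. (g' x)\<^sup>2 \<partial>M)\<bar> = \<bar>\<integral>x. (g x)\<^sup>2 - (g' x)\<^sup>2 \<partial>M\<bar>"
    using assms(1,2) by simp
  also have "\<dots> \<le> (\<integral>x. \<bar>(g x)\<^sup>2 - (g' x)\<^sup>2\<bar> \<partial>M)"
    by (rule integral_abs_bound)
  also have "\<dots> \<le> (\<integral>x. \<epsilon> * h x \<partial>M)"
    using assms(1-3) pointwise by (intro integral_mono) auto
  finally show ?thesis by simp
qed

lemma (in finite_measure) integrable_if_square_integrable_nonneg: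
  fixes g :: "'a \<Rightarrow> real"
  assumes "integrable M (\<lambda>x. (g x)\<^sup>2)" "\<And>x. g x \<ge> 0"
  shows "integrable M g"
proof (rule square_integrable_imp_integrable[OF _ assms(1)])
  have "(\<lambda>x. sqrt ((g x)\<^sup>2)) \<in> borel_measurable M"
    using borel_measurable_integrable[OF assms(1)] by measurable
  then show "g \<in> borel_measurable M" using assms(2) by simp
qed

lemma integral_residual_square_diff_le:
  fixes N N' N\<^sub>0 f :: "'a \<Rightarrow> nat \<Rightarrow> real"
  assumes "finite_measure M"
    and "integrable M (\<lambda>x. (vnorm n (\<lambda>i. N x i - f x i))\<^sup>2)"
    and "integrable M (\<lambda>x. (vnorm n (\<lambda>i. N' x i - f x i))\<^sup>2)"
    and "integrable M (\<lambda>x. (vnorm n (\<lambda>i. N\<^sub>0 x i - f x i))\<^sup>2)"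
    and diff: "\<And>x. x \<in> space M \<Longrightarrow> vnorm n (\<lambda>i. N x i - N' x i) \<le> \<epsilon>"
    and near: "\<And>x. x \<in> space M \<Longrightarrow> vnorm n (\<lambda>i. N x i - N\<^sub>0 x i) \<le> D"
    and near': "\<And>x. x \<in> space M \<Longrightarrow> vnorm n (\<lambda>i. N' x i - N\<^sub>0 x i) \<le> D"
  shows "\<bar>(\<integral>x. (vnorm n (\<lambda>i. N x i - f x i))\<^sup>2 \<partial>M) - (\<integral>x. (vnorm n (\<lambda>i. N' x i - f x i))\<^sup>2 \<partial>M)\<bar>
    \<le> \<epsilon> * (\<integral>x. 2 * (vnorm n (\<lambda>i. N\<^sub>0 x i - f x i) + D) \<partial>M)"
proof (rule integral_square_diff_le)
  interpret finite_measure M by fact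
  have "integrable M (\<lambda>x. vnorm n (\<lambda>i. N\<^sub>0 x i - f x i))"
    using assms(4) by (rule integrable_if_square_integrable_nonneg) (rule vnorm_nonneg)
  then show "integrable M (\<lambda>x. 2 * (vnorm n (\<lambda>i. N\<^sub>0 x i - f x i) + D))"
    by simp
next
  fix x assume "x \<in> space M"
  then show "\<bar>vnorm n (\<lambda>i. N x i - f x i) - vnorm n (\<lambda>i. N' x i - f x i)\<bar> \<le> \<epsilon>"
    using vnorm_abs_diff_le[of n "\<lambda>i. N x i - f x i" "\<lambda>i. N' x i - f x i"] diff by force
next
  fix x assume x: "x \<in> space M"
  show "\<bar>vnorm n (\<lambda>i. N x i - f x i)\<bar> + \<bar>vnorm n (\<lambda>i. N' x i - f x i)\<bar>
      \<le> 2 * (vnorm n (\<lambda>i. N\<^sub>0 x i - f x i) + D)"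
    using vnorm_diff_triangle[of n "N x" "f x" "N\<^sub>0 x"] vnorm_diff_triangle[of n "N' x" "f x" "N\<^sub>0 x"]
      near[OF x] near'[OF x]
    by (simp add: vnorm_nonneg)
qed (fact assms)+

theorem lemma2p10:
  fixes ell :: "nat \<Rightarrow> nat" and L :: nat and a b :: real
    and M :: "(nat \<Rightarrow> real) measure" and f :: "(nat \<Rightarrow> real) \<Rightarrow> (nat \<Rightarrow> real)"
    and K :: "(nat \<Rightarrow> real) set"
  assumes L_pos: "L \<ge> 1"
    and ell_pos: "\<And>k. ell k \<ge> 1"
    and ab: "a < b"
    and space_M: "space M = cube (ell 0) a b"
    and sets_M: "sets M = sets (restrict_space (PiM {1..ell 0} (\<lambda>_. borel)) (cube (ell 0) a b))"
    and finite_M: "emeasure M (space M) < \<infinity>"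
    and f_meas: "\<And>i. i \<in> {1..ell L} \<Longrightarrow> (\<lambda>x. f x i) \<in> borel_measurable M"
    and integrable: "\<And>\<theta>. \<theta> \<in> params (dd ell L) \<Longrightarrow>
          integrable M (\<lambda>x. (vnorm (ell L) (\<lambda>i. realiz ell L \<theta> x i - f x i))\<^sup>2)"
    and K_sub: "K \<subseteq> params (dd ell L)"
    and K_compact: "compact K"
  shows "\<exists>C :: real. \<forall>\<theta>\<in>K. \<forall>\<theta>'\<in>K.
     \<bar>loss ell L M f \<theta> - loss ell L M f \<theta>'\<bar>
     + (SUP x\<in>cube (ell 0) a b. vnorm (ell L) (\<lambda>i. realiz ell L \<theta> x i - realiz ell L \<theta>' x i))
     \<le> C * vnorm (dd ell L) (\<lambda>i. \<theta> i - \<theta>' i)"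
proof -
  obtain R where "R \<ge> 0" and R: "\<And>\<theta> m. \<theta> \<in> K \<Longrightarrow> \<bar>\<theta> m\<bar> \<le> R"
    using compact_params_abs_le[OF K_compact K_sub] by blast
  define B where "B = \<bar>a\<bar> + \<bar>b\<bar>"
  define c where "c = real (ell L) * realiz_lipschitz_const ell R B L"
  define D where "D = real (ell L) * (2 * realiz_bound ell R B L)"
  define I where "I = (\<integral>x. 2 * (vnorm (ell L) (\<lambda>i. realiz ell L (\<lambda>_. 0) x i - f x i) + D) \<partial>M)"
  have realiz_lip: "vnorm (ell L) (\<lambda>i. realiz ell L \<theta> x i - realiz ell L \<theta>' x i)
      \<le> c * vnorm (dd ell L) (\<lambda>i. \<theta> i - \<theta>' i)"
    if "\<theta> \<in> K" "\<theta>' \<in> K" "x \<in> cube (ell 0) a b" for \<theta> \<theta>' x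
    unfolding c_def using that K_sub
    by (intro realiz_diff_vnorm_le[where R = R and B = B]) (auto intro: R cube_abs_le simp: B_def)
  have realiz_near_zero: "vnorm (ell L) (\<lambda>i. realiz ell L \<theta> x i - realiz ell L (\<lambda>_. 0) x i) \<le> D"
    if "\<theta> \<in> K" "x \<in> cube (ell 0) a b" for \<theta> x
    unfolding D_def using that \<open>R \<ge> 0\<close>
    by (intro realiz_diff_vnorm_le_bound) (auto intro: R cube_abs_le simp: B_def)
  have loss_lip: "\<bar>loss ell L M f \<theta> - loss ell L M f \<theta>'\<bar> \<le> c * vnorm (dd ell L) (\<lambda>i. \<theta> i - \<theta>' i) * I"
    if "\<theta> \<in> K" "\<theta>' \<in> K" for \<theta> \<theta>'
    unfolding loss_def I_def using that K_sub space_M finite_M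
    by (intro integral_residual_square_diff_le finite_measureI integrable realiz_lip realiz_near_zero)
      (auto simp: params_def)
  have sup_lip: "(SUP x\<in>cube (ell 0) a b. vnorm (ell L) (\<lambda>i. realiz ell L \<theta> x i - realiz ell L \<theta>' x i))
      \<le> c * vnorm (dd ell L) (\<lambda>i. \<theta> i - \<theta>' i)"
    if "\<theta> \<in> K" "\<theta>' \<in> K" for \<theta> \<theta>'
    using ab that by (intro cSUP_least cube_nonempty realiz_lip) auto
  show ?thesis
    by (intro exI[of _ "c * (I + 1)"] ballI order_trans[OF add_mono[OF loss_lip sup_lip]])
      (simp_all add: algebra_simps)
qed

end
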